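(* There exist a residual subset $P_0\subseteq\mathbb{T}$ and a subset $G\subseteq\mathbb{T}$ of full Lebesgue measure such that for every $\alpha\in P_0$ and every $\beta\in G$, the sequence $\{\alpha n^3+\beta n^2\}_{n\ge0}$ in $\mathbb{T}$ has the repetition property.
   Context: $\mathbb{T}=\mathbb{R}/\mathbb{Z}$ with metric $\mathrm{dist}(x,y)=\langle x-y\rangle$, where $\langle\tau\rangle=\min\{|\hat\tau-p|:p\in\mathbb{Z}\}$ for any representative $\hat\tau\in\mathbb{R}$ of $\tau$; for $\alpha,\beta\in\mathbb{T}$ and integer $n$, $\alpha n^3+\beta n^2$ is a well-defined element of $\mathbb{T}$. $\mathbb{Z}_+=\{1,2,\ldots\}$. A sequence $\{\omega_n\}_{n\ge0}$ in a metric space $\Omega$ has the repetition property if for every $\varepsilon>0$ and $r \in \mathbb{Z}_+$ there exists $q \in \mathbb{Z}_+$ such that $\mathrm{dist}(\omega_n,\omega_{n+q}) < \varepsilon$ for $n = 0,1,\ldots, rq$. *)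

theory Defs
  imports "HOL-Analysis.Analysis"
begin

text \<open>The circle T = R/Z is represented through real representatives.
  A subset of T is represented by its preimage in R, i.e. a 1-periodic set of reals.\<close>

definition tnorm :: "real \<Rightarrow> real" where
  "tnorm t = (INF p::int. \<bar>t - of_int p\<bar>)"

definition tdist :: "real \<Rightarrow> real \<Rightarrow> real" where
  "tdist x y = tnorm (x - y)"

definition periodic_set :: "real set \<Rightarrow> bool" where
  "periodic_set S \<longleftrightarrow> (\<forall>x. x \<in> S \<longleftrightarrow> x + 1 \<in> S)"

definition nowhere_dense :: "real set \<Rightarrow> bool" where
  "nowhere_dense S \<longleftrightarrow> interior (closure S) = {}"

definition meagre :: "real set \<Rightarrow> bool" where
  "meagre S \<longleftrightarrow> (\<exists>F :: nat \<Rightarrow> real set. (\<forall>n. nowhere_dense (F n)) \<and> S \<subseteq> (\<Union>n. F n))"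

definition residual :: "real set \<Rightarrow> bool" where
  "residual S \<longleftrightarrow> meagre (UNIV - S)"

definition repetition_property :: "('a \<Rightarrow> 'a \<Rightarrow> real) \<Rightarrow> (nat \<Rightarrow> 'a) \<Rightarrow> bool" where
  "repetition_property d \<omega> \<longleftrightarrow>
     (\<forall>\<epsilon>>0. \<forall>r::nat. r \<ge> 1 \<longrightarrow>
        (\<exists>q::nat. q \<ge> 1 \<and> (\<forall>n\<le>r * q. d (\<omega> n) (\<omega> (n + q)) < \<epsilon>)))"

end

theory Submission
  imports Defs "HOL-Analysis.Kronecker_Approximation_Theorem"
begin

(* Put q = j*d.  Expanding the cube and the square,
     f(n+q) - f(n) = (q*alpha)(3n^2 + 3nq + q^2) + (q*beta)(2n + q)   for f(n) = alpha n^3 + beta n^2,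
   so f(n) and f(n+q) are epsilon-close in T for all n <= r*q as soon as q*alpha is within
   about 1/(d q^2) and q*beta within about 1/(d q) of an integer, d being large.
   The beta-condition is of Khintchine type and holds for almost every beta: for fixed d the
   set of x for which all j*d*x (j >= 1) stay (1/d^2)/j away from the integers is null by a
   Lebesgue density argument (Dirichlet's theorem punches holes of proportional size into
   every small ball), so a finite range j <= J(d) already fails only on a set of measure
   < 2^-d, and Borel--Cantelli applies.  Knowing J(d), the alpha-condition asks d*alpha to be
   extremely close to an integer for infinitely many d; this is a dense G_delta condition,
   because every rational with denominator d satisfies it. *)


subsection \<open>A Lebesgue density lemma\<close>

lemma disjoint_balls_deficit:
  fixes S :: "'a::euclidean_space set" and C :: "('a \<times> real) set"
  assumes S: "S \<in> sets lebesgue" and C: "countable C"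
    and disj: "disjoint_family_on (\<lambda>i. ball (fst i) (snd i)) C"
    and deficit: "\<And>i. i \<in> C \<Longrightarrow>
      ennreal \<kappa> * emeasure lebesgue (ball (fst i) (snd i)) \<le> emeasure lebesgue (ball (fst i) (snd i) - S)"
  shows "ennreal \<kappa> * emeasure lebesgue (\<Union>i\<in>C. ball (fst i) (snd i))
           \<le> emeasure lebesgue ((\<Union>i\<in>C. ball (fst i) (snd i)) - S)"
proof -
  have disj': "disjoint_family_on (\<lambda>i. ball (fst i) (snd i) - S) C"
    using disj unfolding disjoint_family_on_def by blast
  have "ennreal \<kappa> * emeasure lebesgue (\<Union>i\<in>C. ball (fst i) (snd i))
      = (\<integral>\<^sup>+i. ennreal \<kappa> * emeasure lebesgue (ball (fst i) (snd i)) \<partial>count_space C)"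
    by (subst emeasure_UN_countable) (use C disj in \<open>auto simp: nn_integral_cmult\<close>)
  also have "\<dots> \<le> (\<integral>\<^sup>+i. emeasure lebesgue (ball (fst i) (snd i) - S) \<partial>count_space C)"
    using deficit by (intro nn_integral_mono) auto
  also have "\<dots> = emeasure lebesgue (\<Union>i\<in>C. ball (fst i) (snd i) - S)"
    by (rule emeasure_UN_countable[symmetric]) (use C disj' S in auto)
  also have "(\<Union>i\<in>C. ball (fst i) (snd i) - S) = (\<Union>i\<in>C. ball (fst i) (snd i)) - S"
    by blast
  finally show ?thesis .
qed

lemma deficient_ball_cover:
  fixes S T :: "'a::euclidean_space set"
  assumes S: "S \<in> sets lebesgue" and T: "open T" "S \<subseteq> T"
    and holes: "\<And>x e. x \<in> S \<Longrightarrow> e > 0 \<Longrightarrow> \<exists>\<rho>. 0 < \<rho> \<and> \<rho> < e \<and>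
      ennreal \<kappa> * emeasure lebesgue (ball x \<rho>) \<le> emeasure lebesgue (ball x \<rho> - S)"
  obtains B where "B \<subseteq> T" "emeasure lebesgue S \<le> emeasure lebesgue B"
    "ennreal \<kappa> * emeasure lebesgue B \<le> emeasure lebesgue (B - S)"
proof -
  define K where "K = {(x, \<rho>). 0 < \<rho> \<and> ball x \<rho> \<subseteq> T \<and>
      ennreal \<kappa> * emeasure lebesgue (ball x \<rho>) \<le> emeasure lebesgue (ball x \<rho> - S)}"
  have fine: "\<exists>i. i \<in> K \<and> x \<in> ball (fst i) (snd i) \<and> snd i < e" if "x \<in> S" "e > 0" for x e
  proof -
    obtain e' where e': "e' > 0" "ball x e' \<subseteq> T"
      using T \<open>x \<in> S\<close> open_contains_ball_eq by blast
    obtain \<rho> where \<rho>: "0 < \<rho>" "\<rho> < min e e'"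
      "ennreal \<kappa> * emeasure lebesgue (ball x \<rho>) \<le> emeasure lebesgue (ball x \<rho> - S)"
      using holes[OF \<open>x \<in> S\<close>, of "min e e'"] \<open>e > 0\<close> e' by auto
    then have "(x, \<rho>) \<in> K"
      using e' subset_ball[of \<rho> e' x] unfolding K_def by auto
    with \<rho> show ?thesis by (intro exI[of _ "(x, \<rho>)"]) auto
  qed
  obtain C where C: "countable C" "C \<subseteq> K"
      "pairwise (\<lambda>i j. disjnt (ball (fst i) (snd i)) (ball (fst j) (snd j))) C"
      "negligible (S - (\<Union>i\<in>C. ball (fst i) (snd i)))"
    using Vitali_covering_theorem_balls[of S K fst snd] fine by blast
  define B where "B = (\<Union>i\<in>C. ball (fst i) (snd i))"
  have "open B" unfolding B_def by auto
  then have Bsets: "B \<in> sets lebesgue" by (metis borel_open sets_completionI_sets sets_lborel)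
  show thesis
  proof
    show "B \<subseteq> T" unfolding B_def
    proof (rule UN_least)
      fix i assume "i \<in> C"
      with C(2) show "ball (fst i) (snd i) \<subseteq> T" unfolding K_def by (cases i) auto
    qed
    have "S - B \<in> null_sets lebesgue"
      using C(4) unfolding B_def by (simp add: negligible_iff_null_sets)
    then have "emeasure lebesgue (B \<union> (S - B)) = emeasure lebesgue B"
      by (rule emeasure_Un_null_set[OF Bsets])
    moreover have "emeasure lebesgue S \<le> emeasure lebesgue (B \<union> (S - B))"
      by (rule emeasure_mono) (use Bsets S in auto)
    ultimately show "emeasure lebesgue S \<le> emeasure lebesgue B" by simp
    show "ennreal \<kappa> * emeasure lebesgue B \<le> emeasure lebesgue (B - S)"
      unfolding B_def using C
      by (intro disjoint_balls_deficit S)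
         (auto simp: K_def pairwise_def disjnt_def disjoint_family_on_def)
  qed
qed

text \<open>Otherwise take an open
  \<open>T \<supseteq> S\<close> exceeding \<open>S\<close> by less than \<open>\<kappa>\<close> times its measure; the cover \<open>B \<subseteq> T\<close>
  above would then miss more of \<open>S\<close> than \<open>T\<close> does.\<close>

lemma density_null:
  fixes S :: "'a::euclidean_space set"
  assumes S: "S \<in> lmeasurable" and \<kappa>: "\<kappa> > 0"
    and holes: "\<And>x e. x \<in> S \<Longrightarrow> e > 0 \<Longrightarrow> \<exists>\<rho>. 0 < \<rho> \<and> \<rho> < e \<and>
      ennreal \<kappa> * emeasure lebesgue (ball x \<rho>) \<le> emeasure lebesgue (ball x \<rho> - S)"
  shows "S \<in> null_sets lebesgue"
proof (rule ccontr)
  assume "S \<notin> null_sets lebesgue"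
  then have s: "measure lebesgue S > 0"
    using S by (simp add: fmeasurableD null_sets_def emeasure_eq_measure2 order_less_le)
  have Ssets: "S \<in> sets lebesgue" using S by (rule fmeasurableD)
  obtain T where T: "open T" "S \<subseteq> T" "T - S \<in> lmeasurable"
      "emeasure lebesgue (T - S) < ennreal (\<kappa> * measure lebesgue S)"
    using sets_lebesgue_outer_open[OF Ssets] \<kappa> s by (metis mult_pos_pos)
  obtain B where B: "B \<subseteq> T" "emeasure lebesgue S \<le> emeasure lebesgue B"
      "ennreal \<kappa> * emeasure lebesgue B \<le> emeasure lebesgue (B - S)"
    using deficient_ball_cover[OF Ssets T(1,2) holes] by blast
  have "ennreal (\<kappa> * measure lebesgue S) \<le> ennreal \<kappa> * emeasure lebesgue B"
    using B(2) S \<kappa> by (simp add: emeasure_eq_measure2 ennreal_mult mult_left_mono)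
  also have "\<dots> \<le> emeasure lebesgue (B - S)" by (fact B(3))
  also have "\<dots> \<le> emeasure lebesgue (T - S)"
    using B(1) T(3) by (intro emeasure_mono) (auto simp: fmeasurableD)
  finally show False using T(4) by simp
qed


subsection \<open>Badly approximable points are rare\<close>

definition badly_approximable :: "real \<Rightarrow> real \<Rightarrow> real set" where
  "badly_approximable c m =
     {x. \<forall>j::nat. 1 \<le> j \<longrightarrow> (\<forall>p::int. c / real j \<le> \<bar>real j * m * x - of_int p\<bar>)}"

lemma closed_badly_approximable: "closed (badly_approximable c m)"
proof -
  have "badly_approximable c m =
      (\<Inter>j\<in>{1..}. \<Inter>p. {x. c / real j \<le> \<bar>real j * m * x - of_int p\<bar>})"
    unfolding badly_approximable_def by auto
  moreover have "closed {x::real. c / real j \<le> \<bar>real j * m * x - of_int p\<bar>}" for j p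
    by (intro closed_Collect_le continuous_intros)
  ultimately show ?thesis by (simp add: closed_INT)
qed

text \<open>Around the rational point \<open>h/(q*m)\<close> there is a whole ball of radius \<open>c/(q^2 m)\<close>
  free of badly approximable points: there \<open>q*m*x\<close> is closer than \<open>c/q\<close> to \<open>h\<close>.\<close>

lemma ball_avoids_badly_approximable:
  fixes q :: nat and h :: int and c m :: real
  assumes q: "q \<ge> 1" and m: "m > 0"
  shows "ball (of_int h / (q * m)) (c / (q^2 * m)) \<inter> badly_approximable c m = {}"
proof (intro equalityI subsetI)
  fix y assume y: "y \<in> ball (of_int h / (q * m)) (c / (q^2 * m)) \<inter> badly_approximable c m"
  have qm: "q * m > 0" using q m by simp
  have "real q * m * y - of_int h = (q * m) * (y - of_int h / (q * m))"
    using q m by (simp add: field_simps)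
  then have "\<bar>real q * m * y - of_int h\<bar> = (q * m) * \<bar>y - of_int h / (q * m)\<bar>"
    using qm m by (simp add: abs_mult)
  also have "\<dots> < (q * m) * (c / (q^2 * m))"
    using y qm by (intro mult_strict_left_mono) (auto simp: dist_real_def abs_minus_commute)
  also have "\<dots> = c / q" using q m by (simp add: power2_eq_square field_simps)
  moreover have "c / q \<le> \<bar>real q * m * y - of_int h\<bar>"
    using y q unfolding badly_approximable_def by blast
  ultimately show "y \<in> {}" by simp
qed simp

lemma Dirichlet_rational_point:
  fixes m x :: real and Q :: nat
  assumes m: "m > 0" and Q: "Q > 0"
  obtains q :: nat and h :: int where "1 \<le> q" "q \<le> Q" "\<bar>x - of_int h / (q * m)\<bar> < 1 / (q * m * Q)"
proof -
  obtain h k where k: "0 < k" "k \<le> int Q" "\<bar>of_int k * (m * x) - of_int h\<bar> < 1/Q"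
    using Dirichlet_approx[OF Q] by blast
  define q where "q = nat k"
  have q: "q \<ge> 1" "q \<le> Q" "real q = of_int k" using k unfolding q_def by auto
  have "q * m * x - of_int h = (q * m) * (x - of_int h / (q * m))"
    using m q(1) by (simp add: field_simps)
  then have "(q * m) * \<bar>x - of_int h / (q * m)\<bar> < 1 / Q"
    using k(3) m unfolding q(3)[symmetric] by (simp add: abs_mult mult_ac)
  then have "(q * m) * \<bar>x - of_int h / (q * m)\<bar> * Q < 1"
    using Q by (simp add: pos_less_divide_eq)
  then have "\<bar>x - of_int h / (q * m)\<bar> < 1 / (q * m * Q)"
    using m q(1) Q by (simp add: pos_less_divide_eq mult_ac)
  with q that show thesis by blast
qed

text \<open>Hence the badly approximable set has holes of proportional size in every small ball:
  by Dirichlet's theorem \<open>x\<close> is very close to such a rational point \<open>h/(q*m)\<close>.\<close>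

lemma badly_approximable_holes:
  assumes c: "0 < c" "c \<le> 1" and m: "m \<ge> 1" and e: "e > 0"
  shows "\<exists>\<rho>. 0 < \<rho> \<and> \<rho> < e \<and>
    ennreal (c/2) * emeasure lebesgue (ball x \<rho>) \<le> emeasure lebesgue (ball x \<rho> - badly_approximable c m)"
proof -
  obtain Q :: nat where Q: "2/e < real Q" using reals_Archimedean2 by blast
  then have "Q > 0" using e by (smt (verit) divide_pos_pos of_nat_0_less_iff)
  then obtain q :: nat and h :: int where q: "1 \<le> q" "q \<le> Q"
      and "\<bar>x - of_int h / (q * m)\<bar> < 1 / (q * m * Q)"
    using Dirichlet_rational_point m by (metis less_le_trans zero_less_one)
  define y0 where "y0 = of_int h / (q * m)"
  have xy0: "\<bar>x - y0\<bar> < 1 / (q * m * Q)" unfolding y0_def by fact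
  define \<rho> where "\<rho> = 2 / (q * m * Q)"
  define r where "r = c / (q * m * Q)"
  have qm: "q * m \<ge> 1" using mult_mono[of 1 "real q" 1 m] q m by simp
  have pos: "q * m * Q > 0" using qm \<open>Q > 0\<close> by simp
  have "r \<le> c / (q^2 * m)"
    unfolding r_def using q c m \<open>Q > 0\<close>
    by (intro divide_left_mono) (auto simp: power2_eq_square intro!: mult_right_mono)
  then have "ball y0 r \<inter> badly_approximable c m = {}"
    using ball_avoids_badly_approximable[OF q(1), of m h c] m subset_ball[of r "c / (q^2 * m)" y0]
    unfolding y0_def by auto
  moreover have "ball y0 r \<subseteq> ball x \<rho>"
  proof -
    have "r \<le> 1 / (q * m * Q)" unfolding r_def using c pos by (simp add: divide_right_mono)
    then show ?thesis using xy0 unfolding \<rho>_def by (auto simp: dist_real_def)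
  qed
  ultimately have sub: "ball y0 r \<subseteq> ball x \<rho> - badly_approximable c m" by blast
  have "\<rho> \<le> 2 / Q" unfolding \<rho>_def using qm \<open>Q > 0\<close>
    by (intro divide_left_mono) (auto simp: mult_le_cancel_right1)
  also have "\<dots> < e" using Q e \<open>Q > 0\<close> by (simp add: field_simps)
  finally have "\<rho> < e" .
  have "ennreal (c/2) * emeasure lebesgue (ball x \<rho>) = ennreal (c/2 * (2 * \<rho>))"
    using pos c unfolding \<rho>_def by (simp add: ball_eq_greaterThanLessThan ennreal_mult'[symmetric] mult_ac)
  also have "\<dots> = emeasure lebesgue (ball y0 r)"
    using pos c unfolding \<rho>_def r_def by (simp add: ball_eq_greaterThanLessThan mult_ac)
  also have "\<dots> \<le> emeasure lebesgue (ball x \<rho> - badly_approximable c m)"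
    using sub closed_badly_approximable
    by (intro emeasure_mono sets_completionI_sets) (auto simp: sets_lborel)
  finally have "ennreal (c/2) * emeasure lebesgue (ball x \<rho>)
      \<le> emeasure lebesgue (ball x \<rho> - badly_approximable c m)" .
  moreover have "\<rho> > 0" using pos unfolding \<rho>_def by simp
  ultimately show ?thesis using \<open>\<rho> < e\<close> by blast
qed

lemma badly_approximable_bounded_null:
  assumes "0 < c" "c \<le> 1" "m \<ge> 1"
  shows "badly_approximable c m \<inter> cball 0 R \<in> null_sets lebesgue"
proof (rule density_null[where \<kappa> = "c/2"])
  show "badly_approximable c m \<inter> cball 0 R \<in> lmeasurable"
    by (intro lmeasurable_compact closed_Int_compact closed_badly_approximable compact_cball)
  fix x e :: real assume "e > 0"
  then obtain \<rho> where \<rho>: "0 < \<rho>" "\<rho> < e"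
      "ennreal (c/2) * emeasure lebesgue (ball x \<rho>) \<le> emeasure lebesgue (ball x \<rho> - badly_approximable c m)"
    using badly_approximable_holes assms by blast
  moreover have "emeasure lebesgue (ball x \<rho> - badly_approximable c m)
      \<le> emeasure lebesgue (ball x \<rho> - badly_approximable c m \<inter> cball 0 R)"
    using closed_badly_approximable
    by (intro emeasure_mono sets_completionI_sets) (auto simp: sets_lborel)
  ultimately show "\<exists>\<rho>>0. \<rho> < e \<and> ennreal (c/2) * emeasure lebesgue (ball x \<rho>)
      \<le> emeasure lebesgue (ball x \<rho> - badly_approximable c m \<inter> cball 0 R)"
    by (meson order.trans)
qed (use assms in simp)

definition badly_approximable_upto :: "real \<Rightarrow> real \<Rightarrow> real \<Rightarrow> nat \<Rightarrow> real set" where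
  "badly_approximable_upto c m R J = {x. x \<in> cball 0 R \<and> (\<forall>j::nat. 1 \<le> j \<and> j \<le> J \<longrightarrow>
      (\<forall>p::int. c / real j \<le> \<bar>real j * m * x - of_int p\<bar>))}"

lemma compact_badly_approximable_upto: "compact (badly_approximable_upto c m R J)"
proof -
  have "badly_approximable_upto c m R J = cball 0 R \<inter>
      (\<Inter>j\<in>{1..J}. \<Inter>p. {x. c / real j \<le> \<bar>real j * m * x - of_int p\<bar>})"
    unfolding badly_approximable_upto_def by auto
  moreover have "closed {x::real. c / real j \<le> \<bar>real j * m * x - of_int p\<bar>}" for j p
    by (intro closed_Collect_le continuous_intros)
  ultimately show ?thesis by (simp add: closed_INT compact_Int_closed)
qed

text \<open>The truncations decrease to a null set, so their measures tend to zero.\<close>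

lemma badly_approximable_upto_small:
  assumes "0 < c" "c \<le> 1" "m \<ge> 1" "\<epsilon> > 0"
  shows "\<exists>J. emeasure lebesgue (badly_approximable_upto c m R J) < ennreal \<epsilon>"
proof -
  let ?F = "badly_approximable_upto c m R"
  have meas: "?F J \<in> lmeasurable" for J
    by (rule lmeasurable_compact[OF compact_badly_approximable_upto])
  have fin: "emeasure lebesgue (?F J) \<noteq> \<infinity>" for J
    using meas[of J] unfolding fmeasurable_def by auto
  have "(\<lambda>J. emeasure lebesgue (?F J)) \<longlonglongrightarrow> emeasure lebesgue (\<Inter>J. ?F J)"
    using meas fin by (intro Lim_emeasure_decseq)
      (auto simp: decseq_def badly_approximable_upto_def fmeasurableD)
  moreover have "(\<Inter>J. ?F J) = badly_approximable c m \<inter> cball 0 R"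
    unfolding badly_approximable_upto_def badly_approximable_def by auto
  ultimately have "(\<lambda>J. emeasure lebesgue (?F J)) \<longlonglongrightarrow> 0"
    using null_setsD1[OF badly_approximable_bounded_null[OF assms(1-3)]] by simp
  then have "eventually (\<lambda>J. emeasure lebesgue (?F J) < ennreal \<epsilon>) sequentially"
    using \<open>\<epsilon> > 0\<close> by (intro order_tendstoD(2)) auto
  then show ?thesis by (meson eventually_sequentially order.refl)
qed


lemma near_int_shift:
  "(\<exists>p::int. \<bar>x + of_int k - of_int p\<bar> < e) \<longleftrightarrow> (\<exists>p::int. \<bar>x - of_int p\<bar> < e)"
proof
  assume "\<exists>p::int. \<bar>x + of_int k - of_int p\<bar> < e"
  then obtain p :: int where "\<bar>x - of_int (p - k)\<bar> < e" by (auto simp: algebra_simps)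
  then show "\<exists>p::int. \<bar>x - of_int p\<bar> < e" by blast
next
  assume "\<exists>p::int. \<bar>x - of_int p\<bar> < e"
  then obtain p :: int where "\<bar>x + of_int k - of_int (p + k)\<bar> < e" by (auto simp: algebra_simps)
  then show "\<exists>p::int. \<bar>x + of_int k - of_int p\<bar> < e" by blast
qed

lemma near_int_mult_shift:
  fixes m :: nat
  shows "(\<exists>p::int. \<bar>real m * (x + 1) - of_int p\<bar> < e) \<longleftrightarrow> (\<exists>p::int. \<bar>real m * x - of_int p\<bar> < e)"
  using near_int_shift[of "real m * x" "int m" e] by (simp add: distrib_left)


subsection \<open>The full-measure set of admissible \<open>\<beta>\<close>\<close>

definition Jbound :: "nat \<Rightarrow> nat" where
  "Jbound d = (SOME J. emeasure lebesgue (badly_approximable_upto (1 / (real d)^2) d d J) < ennreal ((1/2)^d))"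

lemma Jbound:
  assumes "d \<ge> 1"
  shows "emeasure lebesgue (badly_approximable_upto (1 / (real d)^2) d d (Jbound d)) < ennreal ((1/2)^d)"
proof -
  have "0 < 1 / (real d)^2" "1 / (real d)^2 \<le> 1" "real d \<ge> 1" using assms by auto
  from badly_approximable_upto_small[OF this, of "(1/2)^d" "real d"]
  show ?thesis unfolding Jbound_def by (rule someI_ex) simp
qed

definition Gset :: "real set" where
  "Gset = {\<beta>. \<exists>D. \<forall>d\<ge>D. \<exists>j. 1 \<le> j \<and> j \<le> Jbound d \<and>
     (\<exists>p::int. \<bar>real (j * d) * \<beta> - of_int p\<bar> < (1 / (real d)^2) / real j)}"

lemma periodic_Gset: "periodic_set Gset"
  unfolding periodic_set_def Gset_def by (simp only: mem_Collect_eq near_int_mult_shift simp_thms)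

text \<open>Points outside \<open>Gset\<close> lie in infinitely many of the small truncated sets;
  by Borel--Cantelli they form a null set.\<close>

lemma Gset_null: "UNIV - Gset \<in> null_sets lebesgue"
proof -
  define A where "A d = (if d = 0 then {}
      else badly_approximable_upto (1 / (real d)^2) d d (Jbound d))" for d
  have Am: "A d \<in> lmeasurable" for d
    unfolding A_def using lmeasurable_compact[OF compact_badly_approximable_upto] by auto
  have "measure lebesgue (A d) \<le> (1/2)^d" for d
  proof (cases "d = 0")
    case False
    then have "emeasure lebesgue (A d) < ennreal ((1/2)^d)" unfolding A_def using Jbound[of d] by simp
    then show ?thesis using Am by (simp add: emeasure_eq_measure2 ennreal_less_iff)
  qed (simp add: A_def)
  then have "limsup A \<in> null_sets lebesgue"
  proof (intro borel_cantelli_limsup1)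
    show "A n \<in> sets lebesgue" "emeasure lebesgue (A n) < \<infinity>" for n
      using Am[of n] by (auto simp: fmeasurable_def)
  qed (rule summable_comparison_test'[OF summable_geometric, of "1/2" 0], auto)
  moreover have "UNIV - Gset \<subseteq> limsup A"
  proof
    fix \<beta> assume "\<beta> \<in> UNIV - Gset"
    then have bad: "\<forall>D. \<exists>d\<ge>D. \<forall>j. 1 \<le> j \<and> j \<le> Jbound d \<longrightarrow>
        (\<forall>p::int. \<not> \<bar>real (j * d) * \<beta> - of_int p\<bar> < (1 / (real d)^2) / real j)"
      unfolding Gset_def by blast
    have "\<exists>d\<ge>n. \<beta> \<in> A d" for n
    proof -
      obtain d where d: "d \<ge> max (max n 1) (nat \<lceil>\<bar>\<beta>\<bar>\<rceil>)" and
        dd: "\<forall>j. 1 \<le> j \<and> j \<le> Jbound d \<longrightarrow>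
          (\<forall>p::int. \<not> \<bar>real (j * d) * \<beta> - of_int p\<bar> < (1 / (real d)^2) / real j)"
        using bad by blast
      have "\<bar>\<beta>\<bar> \<le> real d" using d by linarith
      then have "\<beta> \<in> A d" using d dd unfolding A_def badly_approximable_upto_def by (auto simp: not_less)
      then show ?thesis using d by auto
    qed
    then show "\<beta> \<in> limsup A" unfolding limsup_INF_SUP by auto
  qed
  ultimately show ?thesis by (metis negligible_iff_null_sets negligible_subset)
qed


subsection \<open>The residual set of admissible \<open>\<alpha>\<close>\<close>

lemma rational_approx_large_denominator:
  fixes x e :: real and k :: nat
  assumes e: "e > 0"
  obtains d :: nat and p :: int where "k \<le> d" "1 \<le> d" "\<bar>x - of_int p / real d\<bar> < e"
proof -
  define d where "d = nat \<lceil>1/e\<rceil> + k + 1"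
  have d: "1 \<le> d" "k \<le> d" "1/e < real d" unfolding d_def by linarith+
  then have "real d > 0" "1 / real d < e" using e by (auto simp: field_simps)
  define p where "p = \<lfloor>real d * x\<rfloor>"
  have "\<bar>real d * x - of_int p\<bar> < 1" unfolding p_def by linarith
  moreover have "x - of_int p / real d = (real d * x - of_int p) / real d"
    using \<open>real d > 0\<close> by (simp add: field_simps)
  ultimately have "\<bar>x - of_int p / real d\<bar> < 1 / real d"
    using \<open>real d > 0\<close> by (simp add: divide_strict_right_mono)
  with \<open>1 / real d < e\<close> have "\<bar>x - of_int p / real d\<bar> < e" by linarith
  with d that show thesis by blast
qed

text \<open>For any positive rate \<open>h\<close>, the numbers \<open>\<alpha>\<close> with \<open>|d*\<alpha> - p| < h(d)\<close> for infinitely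
  many \<open>d\<close> form a residual set: its complement is covered by the closed sets \<open>F k\<close> of
  numbers badly approximated from denominator \<open>k\<close> on, which avoid all rationals
  with such denominators and therefore have empty interior.\<close>

lemma residual_well_approximable:
  fixes h :: "nat \<Rightarrow> real"
  assumes h: "\<And>d. d \<ge> 1 \<Longrightarrow> h d > 0"
  shows "residual {\<alpha>. \<forall>k. \<exists>d\<ge>k. d \<ge> 1 \<and> (\<exists>p::int. \<bar>real d * \<alpha> - of_int p\<bar> < h d)}"
proof -
  define F where "F k = {\<alpha>. \<forall>d. k \<le> d \<and> 1 \<le> d \<longrightarrow> (\<forall>p::int. h d \<le> \<bar>real d * \<alpha> - of_int p\<bar>)}" for k
  have cover: "UNIV - {\<alpha>. \<forall>k. \<exists>d\<ge>k. d \<ge> 1 \<and> (\<exists>p::int. \<bar>real d * \<alpha> - of_int p\<bar> < h d)} \<subseteq> (\<Union>k. F k)"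
  proof
    fix x assume "x \<in> UNIV - {\<alpha>. \<forall>k. \<exists>d\<ge>k. d \<ge> 1 \<and> (\<exists>p::int. \<bar>real d * \<alpha> - of_int p\<bar> < h d)}"
    then obtain k where "\<forall>d\<ge>k. \<not> (d \<ge> 1 \<and> (\<exists>p::int. \<bar>real d * x - of_int p\<bar> < h d))" by blast
    then have "x \<in> F k" unfolding F_def by (auto simp: not_less)
    then show "x \<in> (\<Union>k. F k)" by blast
  qed
  have "closed (F k)" for k
  proof -
    have "F k = (\<Inter>d\<in>{d. k \<le> d \<and> 1 \<le> d}. \<Inter>p. {\<alpha>. h d \<le> \<bar>real d * \<alpha> - of_int p\<bar>})"
      unfolding F_def by auto
    moreover have "closed {\<alpha>::real. h d \<le> \<bar>real d * \<alpha> - of_int p\<bar>}" for d p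
      by (intro closed_Collect_le continuous_intros)
    ultimately show ?thesis by (simp add: closed_INT)
  qed
  moreover have "interior (F k) = {}" for k
  proof (rule ccontr)
    assume "interior (F k) \<noteq> {}"
    then obtain x e where e: "e > 0" "ball x e \<subseteq> F k" by (meson ex_in_conv mem_interior)
    obtain d p where d: "k \<le> d" "1 \<le> d" "\<bar>x - of_int p / real d\<bar> < e"
      using rational_approx_large_denominator[OF e(1)] by blast
    then have "of_int p / real d \<in> F k"
      using e(2) by (auto simp: dist_real_def)
    then have "h d \<le> \<bar>real d * (of_int p / real d) - of_int p\<bar>" using d unfolding F_def by blast
    then show False using h[OF d(2)] d(2) by simp
  qed
  ultimately have "nowhere_dense (F k)" for k by (simp add: nowhere_dense_def)
  then show ?thesis unfolding residual_def meagre_def using cover by blast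
qed

text \<open>The rate used for \<open>\<alpha>\<close> is tuned to \<open>Jbound\<close>: it makes \<open>q*\<alpha>\<close> very close to an integer
  for every \<open>q = j*d\<close> with \<open>j \<le> Jbound d\<close>.\<close>

definition Prate :: "nat \<Rightarrow> real" where
  "Prate d = 1 / ((real d)^3 * (real (Jbound d) + 1)^3)"

definition Pset :: "real set" where
  "Pset = {\<alpha>. \<forall>k. \<exists>d\<ge>k. d \<ge> 1 \<and> (\<exists>p::int. \<bar>real d * \<alpha> - of_int p\<bar> < Prate d)}"

lemma residual_Pset: "residual Pset"
  unfolding Pset_def Prate_def by (rule residual_well_approximable) simp

lemma periodic_Pset: "periodic_set Pset"
  unfolding periodic_set_def Pset_def by (simp only: mem_Collect_eq near_int_mult_shift simp_thms)

lemma Prate_bound: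
  assumes "1 \<le> j" "j \<le> Jbound d" "1 \<le> d"
  shows "real j * Prate d \<le> 1 / (real d * (real j * real d)^2)"
proof -
  have "real j ^ 3 \<le> (real (Jbound d) + 1) ^ 3" using assms by (intro power_mono) auto
  then have "(real d)^3 * (real j)^3 \<le> (real d)^3 * (real (Jbound d) + 1)^3"
    by (intro mult_left_mono) auto
  then have "real j / ((real d)^3 * (real (Jbound d) + 1)^3) \<le> real j / ((real d)^3 * (real j)^3)"
    using assms by (intro divide_left_mono) auto
  then have "real j * Prate d \<le> real j / ((real d)^3 * (real j)^3)"
    unfolding Prate_def by simp
  also have "\<dots> = 1 / (real d * (real j * real d)^2)"
    using assms by (simp add: field_simps power2_eq_square power3_eq_cube)
  finally show ?thesis .
qed


lemma tnorm_le: "tnorm t \<le> \<bar>t - of_int z\<bar>"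
  unfolding tnorm_def by (rule cINF_lower) (auto intro: bdd_belowI2[of _ 0])

text \<open>Shifting \<open>n\<close> by \<open>q\<close> moves \<open>\<alpha> n^3 + \<beta> n^2\<close> by
  \<open>(q\<alpha>)(3n^2 + 3nq + q^2) + (q\<beta>)(2n + q)\<close>; for \<open>n \<le> r*q\<close> this is controlled by the
  distances of \<open>q\<alpha>\<close> and \<open>q\<beta>\<close> to integers \<open>a\<close> and \<open>b\<close>.\<close>

lemma cubic_shift_estimate:
  fixes \<alpha> \<beta> :: real and q n r :: nat and a b :: int
  assumes n: "n \<le> r * q"
  shows "tdist (\<alpha> * (real n)^3 + \<beta> * (real n)^2) (\<alpha> * (real (n + q))^3 + \<beta> * (real (n + q))^2)
    \<le> \<bar>real q * \<alpha> - of_int a\<bar> * ((3 * (real r)^2 + 3 * real r + 1) * (real q)^2)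
      + \<bar>real q * \<beta> - of_int b\<bar> * ((2 * real r + 1) * real q)"
proof -
  define N Q R where "N = real n" and "Q = real q" and "R = real r"
  have N: "0 \<le> N" "N \<le> R * Q" "0 \<le> Q" using n unfolding N_def Q_def R_def
    by (auto simp flip: of_nat_mult)
  define z where "z = a * (3 * n^2 + 3 * n * q + q^2) + b * (2 * n + q)"
  have "(\<alpha> * (real n)^3 + \<beta> * (real n)^2) - (\<alpha> * (real (n + q))^3 + \<beta> * (real (n + q))^2) - of_int (- z)
      = - ((Q * \<alpha> - a) * (3 * N^2 + 3 * N * Q + Q^2) + (Q * \<beta> - b) * (2 * N + Q))"
    unfolding z_def N_def Q_def by (simp add: power2_eq_square power3_eq_cube algebra_simps)
  then have "tdist (\<alpha> * (real n)^3 + \<beta> * (real n)^2) (\<alpha> * (real (n + q))^3 + \<beta> * (real (n + q))^2)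
      \<le> \<bar>(Q * \<alpha> - a) * (3 * N^2 + 3 * N * Q + Q^2) + (Q * \<beta> - b) * (2 * N + Q)\<bar>"
    unfolding tdist_def using tnorm_le[of _ "- z"] by (metis abs_minus_cancel)
  also have "\<dots> \<le> \<bar>Q * \<alpha> - a\<bar> * (3 * N^2 + 3 * N * Q + Q^2) + \<bar>Q * \<beta> - b\<bar> * (2 * N + Q)"
    using N by (simp add: abs_triangle_ineq[THEN order_trans] abs_mult)
  also have "\<dots> \<le> \<bar>Q * \<alpha> - a\<bar> * ((3 * R^2 + 3 * R + 1) * Q^2) + \<bar>Q * \<beta> - b\<bar> * ((2 * R + 1) * Q)"
  proof -
    have "N^2 \<le> (R * Q)^2" using N by (intro power_mono) auto
    moreover have "N * Q \<le> (R * Q) * Q" using N by (intro mult_right_mono) auto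
    ultimately have "3 * N^2 + 3 * N * Q + Q^2 \<le> (3 * R^2 + 3 * R + 1) * Q^2"
      by (simp add: power2_eq_square algebra_simps)
    moreover have "2 * N + Q \<le> (2 * R + 1) * Q" using N by (simp add: algebra_simps)
    ultimately show ?thesis by (intro add_mono mult_left_mono) auto
  qed
  finally show ?thesis unfolding N_def Q_def R_def .
qed


text \<open>Simultaneous approximation: for \<open>\<alpha> \<in> Pset\<close> and \<open>\<beta> \<in> Gset\<close> take \<open>d\<close> large with
  \<open>d*\<alpha>\<close> very near an integer, then \<open>j \<le> Jbound d\<close> with \<open>j*d*\<beta>\<close> near an integer;
  the common multiple \<open>q = j*d\<close> is good for both numbers.\<close>

lemma Pset_Gset_common_approximation:
  assumes "\<alpha> \<in> Pset" and "\<beta> \<in> Gset"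
  obtains d q :: nat and a b :: int where "M \<le> d" "1 \<le> d" "1 \<le> q"
    "\<bar>real q * \<alpha> - of_int a\<bar> \<le> 1 / (real d * (real q)^2)"
    "\<bar>real q * \<beta> - of_int b\<bar> \<le> 1 / (real d * real q)"
proof -
  obtain D where D: "\<forall>d\<ge>D. \<exists>j. 1 \<le> j \<and> j \<le> Jbound d \<and>
      (\<exists>p::int. \<bar>real (j * d) * \<beta> - of_int p\<bar> < (1 / (real d)^2) / real j)"
    using \<open>\<beta> \<in> Gset\<close> unfolding Gset_def by blast
  obtain d p where d: "d \<ge> max D M" "d \<ge> 1" and p: "\<bar>real d * \<alpha> - of_int p\<bar> < Prate d"
    using \<open>\<alpha> \<in> Pset\<close> unfolding Pset_def by blast
  obtain j p' where j: "1 \<le> j" "j \<le> Jbound d"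
      and p': "\<bar>real (j * d) * \<beta> - of_int p'\<bar> < (1 / (real d)^2) / real j"
    using D d by auto
  define q where "q = j * d"
  have "q \<ge> 1" using j d unfolding q_def by (simp add: one_le_mult_iff)
  have Q: "real q = real j * real d" by (simp add: q_def)
  have "real q * \<alpha> - of_int (int j * p) = real j * (real d * \<alpha> - of_int p)"
    unfolding Q by (simp add: algebra_simps)
  then have "\<bar>real q * \<alpha> - of_int (int j * p)\<bar> = real j * \<bar>real d * \<alpha> - of_int p\<bar>"
    by (simp add: abs_mult)
  also have "\<dots> \<le> real j * Prate d" using p by (intro mult_left_mono) auto
  also have "\<dots> \<le> 1 / (real d * (real q)^2)" unfolding Q by (rule Prate_bound[OF j d(2)])
  finally have "\<bar>real q * \<alpha> - of_int (int j * p)\<bar> \<le> 1 / (real d * (real q)^2)" .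
  moreover have "\<bar>real q * \<beta> - of_int p'\<bar> \<le> 1 / (real d * real q)"
    using p' j d unfolding q_def by (simp add: power2_eq_square field_simps)
  ultimately show thesis using d \<open>q \<ge> 1\<close> by (intro that[of d q "int j * p" p']) auto
qed

text \<open>With such a period \<open>q\<close> the cubic shift estimate bounds every displacement
  \<open>n \<le> r*q\<close> by \<open>(3r^2 + 5r + 2)/d\<close>, which is small for large \<open>d\<close>.\<close>

lemma repetition_Pset_Gset:
  assumes "\<alpha> \<in> Pset" and "\<beta> \<in> Gset"
  shows "repetition_property tdist (\<lambda>n. \<alpha> * (real n)^3 + \<beta> * (real n)^2)"
  unfolding repetition_property_def
proof (intro allI impI)
  fix \<epsilon> :: real and r :: nat assume "\<epsilon> > 0" "r \<ge> 1"
  define K where "K = 3 * (real r)^2 + 5 * real r + 2"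
  obtain d q :: nat and a b :: int where d: "nat \<lceil>K / \<epsilon>\<rceil> + 1 \<le> d" "1 \<le> d" and "1 \<le> q"
      and \<alpha>_err: "\<bar>real q * \<alpha> - of_int a\<bar> \<le> 1 / (real d * (real q)^2)"
      and \<beta>_err: "\<bar>real q * \<beta> - of_int b\<bar> \<le> 1 / (real d * real q)"
    using Pset_Gset_common_approximation[OF assms] by metis
  show "\<exists>q\<ge>1. \<forall>n\<le>r * q. tdist (\<alpha> * (real n)^3 + \<beta> * (real n)^2)
          (\<alpha> * (real (n + q))^3 + \<beta> * (real (n + q))^2) < \<epsilon>"
  proof (intro exI[of _ q] conjI allI impI)
    fix n assume "n \<le> r * q"
    have "tdist (\<alpha> * (real n)^3 + \<beta> * (real n)^2) (\<alpha> * (real (n + q))^3 + \<beta> * (real (n + q))^2)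
        \<le> \<bar>real q * \<alpha> - of_int a\<bar> * ((3 * (real r)^2 + 3 * real r + 1) * (real q)^2)
          + \<bar>real q * \<beta> - of_int b\<bar> * ((2 * real r + 1) * real q)"
      using \<open>n \<le> r * q\<close> by (rule cubic_shift_estimate)
    also have "\<dots> \<le> 1 / (real d * (real q)^2) * ((3 * (real r)^2 + 3 * real r + 1) * (real q)^2)
          + 1 / (real d * real q) * ((2 * real r + 1) * real q)"
      using \<alpha>_err \<beta>_err by (intro add_mono mult_right_mono) auto
    also have "\<dots> = K / real d"
      unfolding K_def using \<open>1 \<le> q\<close> d(2) by (simp add: field_simps power2_eq_square)
    also have "\<dots> < \<epsilon>"
    proof -
      have "K / \<epsilon> < real d" using d by linarith
      then show ?thesis using \<open>\<epsilon> > 0\<close> d by (simp add: field_simps)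
    qed
    finally show "tdist (\<alpha> * (real n)^3 + \<beta> * (real n)^2)
        (\<alpha> * (real (n + q))^3 + \<beta> * (real (n + q))^2) < \<epsilon>" .
  qed (fact \<open>1 \<le> q\<close>)
qed


theorem theorem3p6:
  shows "\<exists>P0 G :: real set.
           periodic_set P0 \<and> residual P0 \<and>
           periodic_set G \<and> (UNIV - G) \<in> null_sets lebesgue \<and>
           (\<forall>\<alpha>\<in>P0. \<forall>\<beta>\<in>G.
              repetition_property tdist (\<lambda>n. \<alpha> * (real n)^3 + \<beta> * (real n)^2))"
proof (intro exI conjI ballI)
  show "periodic_set Pset" "residual Pset" by (fact periodic_Pset, fact residual_Pset)
  show "periodic_set Gset" "UNIV - Gset \<in> null_sets lebesgue" by (fact periodic_Gset, fact Gset_null)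
  show "repetition_property tdist (\<lambda>n. \<alpha> * (real n)^3 + \<beta> * (real n)^2)"
    if "\<alpha> \<in> Pset" "\<beta> \<in> Gset" for \<alpha> \<beta>
    using that by (rule repetition_Pset_Gset)
qed

end
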